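(* Let $X$ be a super $X$-set parameter, let $t\ge 0$ be an integer, let $G$ be a graph, and let $H$ be an induced subgraph of $\mathfrak{X}(G)$ with $H\cong Q_t$. Then there are $X$-sets $S\subseteq T$ of $G$ with $|T\setminus S|=t$ such that $V(H)=\{R: S\subseteq R\subseteq T\}$; i.e., $V(H)$ is an interval of length $t$ in the poset $(\mathcal{P}(V(G)),\subseteq)$.
   Context: All graphs are finite, simple, undirected, with nonempty vertex set. A super $X$-set parameter $X$ assigns to each graph $G$ a family of subsets of $V(G)$, called the $X$-sets of $G$, such that: every graph isomorphism maps $X$-sets to $X$-sets; every graph has at least one $X$-set; and (Superset) if $S$ is an $X$-set of $G$ and $S\subseteq S'\subseteq V(G)$, then $S'$ is an $X$-set of $G$. The $X$-TAR graph $\mathfrak{X}(G)$ has as vertices the $X$-sets of $G$, with $S_1S_2$ an edge iff $|S_1\ominus S_2|=1$. $Q_t$ is the $t$-dimensional hypercube. *)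

theory Defs
  imports Main
begin

type_synonym 'v graph = "'v set \<times> 'v set set"

definition verts :: "'v graph \<Rightarrow> 'v set" where "verts G = fst G"
definition edges :: "'v graph \<Rightarrow> 'v set set" where "edges G = snd G"

definition is_graph :: "'v graph \<Rightarrow> bool" where
  "is_graph G \<longleftrightarrow> finite (verts G) \<and> verts G \<noteq> {} \<and>
     (\<forall>e\<in>edges G. e \<subseteq> verts G \<and> card e = 2)"

definition graph_iso_map :: "('v \<Rightarrow> 'w) \<Rightarrow> 'v graph \<Rightarrow> 'w graph \<Rightarrow> bool" where
  "graph_iso_map f G H \<longleftrightarrow> bij_betw f (verts G) (verts H) \<and>
     (\<forall>u\<in>verts G. \<forall>v\<in>verts G. {u, v} \<in> edges G \<longleftrightarrow> {f u, f v} \<in> edges H)"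

definition graph_isomorphic :: "'v graph \<Rightarrow> 'w graph \<Rightarrow> bool" where
  "graph_isomorphic G H \<longleftrightarrow> (\<exists>f. graph_iso_map f G H)"

definition induced_subgraph :: "'v set \<Rightarrow> 'v graph \<Rightarrow> 'v graph" where
  "induced_subgraph W G = (W, {e \<in> edges G. e \<subseteq> W})"

definition is_induced_subgraph :: "'v graph \<Rightarrow> 'v graph \<Rightarrow> bool" where
  "is_induced_subgraph H G \<longleftrightarrow>
     (\<exists>W. W \<subseteq> verts G \<and> W \<noteq> {} \<and> H = induced_subgraph W G)"

definition sym_diff :: "'a set \<Rightarrow> 'a set \<Rightarrow> 'a set" where
  "sym_diff A B = (A - B) \<union> (B - A)"

text \<open>Super X-set parameter, restricted to graphs whose vertices come from type 'v.\<close>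
definition super_X_param :: "('v graph \<Rightarrow> 'v set set) \<Rightarrow> bool" where
  "super_X_param X \<longleftrightarrow>
     (\<forall>G. is_graph G \<longrightarrow> X G \<subseteq> Pow (verts G) \<and> X G \<noteq> {} \<and>
        (\<forall>S\<in>X G. \<forall>S'. S \<subseteq> S' \<and> S' \<subseteq> verts G \<longrightarrow> S' \<in> X G)) \<and>
     (\<forall>G G' f. is_graph G \<and> is_graph G' \<and> graph_iso_map f G G' \<longrightarrow>
        (\<forall>S\<in>X G. f ` S \<in> X G'))"

definition TAR_graph :: "('v graph \<Rightarrow> 'v set set) \<Rightarrow> 'v graph \<Rightarrow> 'v set graph" where
  "TAR_graph X G = (X G,
     {{S1, S2} | S1 S2. S1 \<in> X G \<and> S2 \<in> X G \<and> card (sym_diff S1 S2) = 1})"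

definition hypercube :: "nat \<Rightarrow> nat set graph" where
  "hypercube t = (Pow {..<t},
     {{A, B} | A B. A \<subseteq> {..<t} \<and> B \<subseteq> {..<t} \<and> card (sym_diff A B) = 1})"

end

theory Submission
  imports Defs
begin

text \<open>Label the cube edge A -- A \<union> {i} by the single element in which its two
  endpoint sets differ. Opposite edges of a square carry the same label, so by induction on A
  the label depends only on i; call it d i. Hence the copy of Q_t consists of the sets
  g \<ominus> d ` A for A \<subseteq> {..<t} with d injective, and such a family is exactly the interval
  from g - D to g \<union> D, where D = d ` {..<t}.\<close>

lemma sym_diff_commute: "sym_diff A B = sym_diff B A"
  unfolding sym_diff_def by blast

lemma sym_diff_assoc: "sym_diff (sym_diff A B) C = sym_diff A (sym_diff B C)"
  unfolding sym_diff_def by blast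

lemma sym_diff_left_cancel: "sym_diff A B = sym_diff A C \<longleftrightarrow> B = C"
  unfolding sym_diff_def by blast

lemma sym_diff_eq_iff: "sym_diff A B = C \<longleftrightarrow> B = sym_diff A C"
  unfolding sym_diff_def by blast

lemma sym_diff_insert_singleton: "sym_diff A (insert i A) = {i} \<longleftrightarrow> i \<notin> A"
  unfolding sym_diff_def by blast

lemma sym_diff_insert_disjoint:
  "y \<notin> D \<Longrightarrow> sym_diff (sym_diff A D) {y} = sym_diff A (insert y D)"
  unfolding sym_diff_def by blast

lemma sym_diff_image_Pow:
  "(\<lambda>B. sym_diff C B) ` Pow D = {R. C - D \<subseteq> R \<and> R \<subseteq> C \<union> D}"
proof (intro equalityI subsetI)
  fix R assume "R \<in> {R. C - D \<subseteq> R \<and> R \<subseteq> C \<union> D}"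
  then have "sym_diff C R \<in> Pow D" and "R = sym_diff C (sym_diff C R)"
    unfolding sym_diff_def by auto
  then show "R \<in> (\<lambda>B. sym_diff C B) ` Pow D" by blast
qed (auto simp: sym_diff_def)

lemma sym_diff_square_label:
  assumes "sym_diff A B = {x}" "sym_diff A C = {y}" "sym_diff B E = {z}" "sym_diff C E = {w}"
    and "B \<noteq> C" "A \<noteq> E"
  shows "w = x"
proof -
  have B_eq: "B = sym_diff A {x}" and C_eq: "C = sym_diff A {y}"
    using assms(1,2) by (simp_all add: sym_diff_eq_iff)
  have E_eq_B: "E = sym_diff B {z}" and E_eq_C: "E = sym_diff C {w}"
    using assms(3,4) by (simp_all add: sym_diff_eq_iff)
  have "x \<noteq> y" using B_eq C_eq assms(5) by blast
  have "x \<noteq> z" using E_eq_B B_eq assms(6) unfolding sym_diff_def by blast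
  have "sym_diff A (sym_diff {x} {z}) = sym_diff A (sym_diff {y} {w})"
    using E_eq_B E_eq_C B_eq C_eq sym_diff_assoc by metis
  then have "sym_diff {x} {z} = sym_diff {y} {w}" by (simp only: sym_diff_left_cancel)
  then show ?thesis using \<open>x \<noteq> y\<close> \<open>x \<noteq> z\<close> unfolding sym_diff_def by blast
qed

lemma cube_embedding_edge_label:
  fixes g :: "nat set \<Rightarrow> 'v set"
  assumes inj: "inj_on g (Pow {..<t})"
    and adj: "\<And>A B. A \<subseteq> {..<t} \<Longrightarrow> B \<subseteq> {..<t} \<Longrightarrow>
               card (sym_diff A B) = 1 \<longleftrightarrow> card (sym_diff (g A) (g B)) = 1"
    and "A \<subseteq> {..<t}" "i < t" "i \<notin> A"
  shows "sym_diff (g A) (g (insert i A)) = {the_elem (sym_diff (g {}) (g {i}))}"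
proof -
  have flip: "\<exists>x. sym_diff (g A) (g (insert i A)) = {x}"
    if "A \<subseteq> {..<t}" "i < t" "i \<notin> A" for A i
  proof -
    have "card (sym_diff A (insert i A)) = 1"
      using that(3) sym_diff_insert_singleton[of A i] by simp
    then have "card (sym_diff (g A) (g (insert i A))) = 1" using adj that by simp
    then show ?thesis by (simp add: card_1_singleton_iff)
  qed
  define d where "d i = the_elem (sym_diff (g {}) (g {i}))" for i
  have "finite A" using \<open>A \<subseteq> {..<t}\<close> finite_subset by blast
  then have "\<forall>i<t. i \<notin> A \<longrightarrow> sym_diff (g A) (g (insert i A)) = {d i}"
    using \<open>A \<subseteq> {..<t}\<close>
  proof (induction A rule: finite_induct)
    case empty
    show ?case unfolding d_def using flip[of "{}"] by fastforce
  next
    case (insert j A)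
    show ?case
    proof (intro allI impI)
      fix i assume i: "i < t" "i \<notin> insert j A"
      have A: "A \<subseteq> {..<t}" "j < t" using insert.prems by auto
      have ab: "sym_diff (g A) (g (insert i A)) = {d i}"
        and ac: "sym_diff (g A) (g (insert j A)) = {d j}"
        using insert.IH[OF A(1)] A(2) i insert.hyps by auto
      obtain z where be: "sym_diff (g (insert i A)) (g (insert j (insert i A))) = {z}"
        using flip[of "insert i A" j] A i insert.hyps by auto
      obtain w where ce: "sym_diff (g (insert j A)) (g (insert i (insert j A))) = {w}"
        using flip[of "insert j A" i] A i insert.hyps by auto
      have "g (insert i A) \<noteq> g (insert j A)"
        using inj_onD[OF inj, of "insert i A" "insert j A"] A i insert.hyps by auto
      moreover have "g A \<noteq> g (insert j (insert i A))"
        using inj_onD[OF inj, of A "insert j (insert i A)"] A i insert.hyps by auto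
      ultimately have "w = d i"
        using sym_diff_square_label[OF ab ac be] ce by (simp add: insert_commute)
      then show "sym_diff (g (insert j A)) (g (insert i (insert j A))) = {d i}" using ce by simp
    qed
  qed
  then show ?thesis using assms(4,5) unfolding d_def by blast
qed

lemma cube_embedding_translate:
  fixes g :: "nat set \<Rightarrow> 'v set"
  assumes inj: "inj_on g (Pow {..<t})"
    and adj: "\<And>A B. A \<subseteq> {..<t} \<Longrightarrow> B \<subseteq> {..<t} \<Longrightarrow>
               card (sym_diff A B) = 1 \<longleftrightarrow> card (sym_diff (g A) (g B)) = 1"
  obtains d where "inj_on d {..<t}" "\<And>A. A \<subseteq> {..<t} \<Longrightarrow> g A = sym_diff (g {}) (d ` A)"
proof
  define d where "d i = the_elem (sym_diff (g {}) (g {i}))" for i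
  have label: "sym_diff (g A) (g (insert i A)) = {d i}" if "A \<subseteq> {..<t}" "i < t" "i \<notin> A" for A i
    unfolding d_def by (rule cube_embedding_edge_label[OF inj adj that])
  show inj_d: "inj_on d {..<t}"
  proof
    fix i j assume ij: "i \<in> {..<t}" "j \<in> {..<t}" "d i = d j"
    then have "sym_diff (g {}) (g {i}) = sym_diff (g {}) (g {j})" using label[of "{}"] by auto
    then have "g {i} = g {j}" by (simp only: sym_diff_left_cancel)
    then show "i = j" using inj_onD[OF inj] ij by auto
  qed
  fix A assume A: "A \<subseteq> {..<t}"
  have "finite A" using A finite_subset by blast
  from \<open>finite A\<close> A show "g A = sym_diff (g {}) (d ` A)"
  proof (induction A rule: finite_induct)
    case empty
    then show ?case unfolding sym_diff_def by simp
  next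
    case (insert i A)
    have "g (insert i A) = sym_diff (g A) {d i}"
      using label[of A i] insert by (simp add: sym_diff_eq_iff)
    moreover have "d i \<notin> d ` A"
      using inj_d insert.prems insert.hyps by (auto dest: inj_onD)
    ultimately show ?case using insert by (simp add: sym_diff_insert_disjoint)
  qed
qed

lemma cube_embedding_image_interval:
  fixes g :: "nat set \<Rightarrow> 'v set"
  assumes "inj_on g (Pow {..<t})"
    and "\<And>A B. A \<subseteq> {..<t} \<Longrightarrow> B \<subseteq> {..<t} \<Longrightarrow>
               card (sym_diff A B) = 1 \<longleftrightarrow> card (sym_diff (g A) (g B)) = 1"
  obtains S T where "S \<subseteq> T" "card (T - S) = t" "g ` Pow {..<t} = {R. S \<subseteq> R \<and> R \<subseteq> T}"
proof -
  obtain d where inj_d: "inj_on d {..<t}"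
    and g: "\<And>A. A \<subseteq> {..<t} \<Longrightarrow> g A = sym_diff (g {}) (d ` A)"
    using cube_embedding_translate[OF assms] by blast
  define D where "D = d ` {..<t}"
  have "g ` Pow {..<t} = (\<lambda>A. sym_diff (g {}) (d ` A)) ` Pow {..<t}"
    \<comment> \<open>not by simp with g: as a rewrite rule g loops on g {}\<close>
    by (rule image_cong[OF refl], rule g) simp
  also have "\<dots> = (\<lambda>B. sym_diff (g {}) B) ` (image d ` Pow {..<t})"
    by (simp only: image_image)
  also have "\<dots> = (\<lambda>B. sym_diff (g {}) B) ` Pow D"
    unfolding D_def by (simp only: image_Pow_surj)
  also have "\<dots> = {R. g {} - D \<subseteq> R \<and> R \<subseteq> g {} \<union> D}"
    by (rule sym_diff_image_Pow)
  finally have "g ` Pow {..<t} = {R. g {} - D \<subseteq> R \<and> R \<subseteq> g {} \<union> D}" .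
  moreover have "(g {} \<union> D) - (g {} - D) = D" by blast
  moreover have "card D = t" using inj_d by (simp add: D_def card_image)
  ultimately show thesis using that[of "g {} - D" "g {} \<union> D"] by auto
qed

lemma hypercube_edge_iff:
  assumes "A \<subseteq> {..<t}" "B \<subseteq> {..<t}"
  shows "{A, B} \<in> edges (hypercube t) \<longleftrightarrow> card (sym_diff A B) = 1"
  using assms unfolding hypercube_def edges_def
  by (auto simp: doubleton_eq_iff sym_diff_commute)

lemma TAR_graph_edge_iff:
  assumes "S1 \<in> X G" "S2 \<in> X G"
  shows "{S1, S2} \<in> edges (TAR_graph X G) \<longleftrightarrow> card (sym_diff S1 S2) = 1"
  using assms unfolding TAR_graph_def edges_def
  by (auto simp: doubleton_eq_iff sym_diff_commute)

lemma induced_hypercube_in_TAR_graph: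
  assumes "is_induced_subgraph H (TAR_graph X G)" "graph_isomorphic H (hypercube t)"
  obtains g where "bij_betw g (Pow {..<t}) (verts H)" "verts H \<subseteq> X G"
    "\<And>A B. A \<subseteq> {..<t} \<Longrightarrow> B \<subseteq> {..<t} \<Longrightarrow>
       card (sym_diff A B) = 1 \<longleftrightarrow> card (sym_diff (g A) (g B)) = 1"
proof -
  obtain W where W: "W \<subseteq> X G" "H = induced_subgraph W (TAR_graph X G)"
    using assms(1) unfolding is_induced_subgraph_def by (auto simp: verts_def TAR_graph_def)
  then have vH: "verts H = W" and eH: "edges H = {e \<in> edges (TAR_graph X G). e \<subseteq> W}"
    unfolding induced_subgraph_def verts_def edges_def by simp_all
  obtain f where bf: "bij_betw f W (Pow {..<t})"
    and ef: "\<And>u v. u \<in> W \<Longrightarrow> v \<in> W \<Longrightarrow> {u, v} \<in> edges H \<longleftrightarrow> {f u, f v} \<in> edges (hypercube t)"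
    using assms(2) unfolding graph_isomorphic_def graph_iso_map_def vH
    by (auto simp: verts_def hypercube_def)
  define g where "g = inv_into W f"
  have bg: "bij_betw g (Pow {..<t}) W" unfolding g_def by (rule bij_betw_inv_into[OF bf])
  have fg: "f (g A) = A" if "A \<subseteq> {..<t}" for A
    unfolding g_def using bf that by (simp add: bij_betw_def f_inv_into_f)
  have gW: "g A \<in> W" if "A \<subseteq> {..<t}" for A using bg that by (auto simp: bij_betw_def)
  have adj: "card (sym_diff A B) = 1 \<longleftrightarrow> card (sym_diff (g A) (g B)) = 1"
    if "A \<subseteq> {..<t}" "B \<subseteq> {..<t}" for A B
  proof -
    have "card (sym_diff A B) = 1 \<longleftrightarrow> {f (g A), f (g B)} \<in> edges (hypercube t)"
      using hypercube_edge_iff[OF that] fg that by simp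
    also have "\<dots> \<longleftrightarrow> {g A, g B} \<in> edges (TAR_graph X G)"
      using ef[of "g A" "g B"] gW that eH by simp
    also have "\<dots> \<longleftrightarrow> card (sym_diff (g A) (g B)) = 1"
      using gW that W(1) by (intro TAR_graph_edge_iff) auto
    finally show ?thesis .
  qed
  from bg W(1) adj show thesis unfolding vH[symmetric] by (rule that)
qed

theorem lemma2p21:
  fixes X :: "'v graph \<Rightarrow> 'v set set"
    and G :: "'v graph"
    and H :: "'v set graph"
    and t :: nat
  assumes "super_X_param X"
    and "is_graph G"
    and "is_induced_subgraph H (TAR_graph X G)"
    and "graph_isomorphic H (hypercube t)"
  shows "\<exists>S T. S \<in> X G \<and> T \<in> X G \<and> S \<subseteq> T \<and> card (T - S) = t \<and>
           verts H = {R. S \<subseteq> R \<and> R \<subseteq> T}"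
proof -
  obtain g where g: "bij_betw g (Pow {..<t}) (verts H)" and HX: "verts H \<subseteq> X G"
    and adj: "\<And>A B. A \<subseteq> {..<t} \<Longrightarrow> B \<subseteq> {..<t} \<Longrightarrow>
       card (sym_diff A B) = 1 \<longleftrightarrow> card (sym_diff (g A) (g B)) = 1"
    using induced_hypercube_in_TAR_graph[OF assms(3,4)] by blast
  obtain S T where "S \<subseteq> T" "card (T - S) = t" and I: "g ` Pow {..<t} = {R. S \<subseteq> R \<and> R \<subseteq> T}"
    using cube_embedding_image_interval[OF bij_betw_imp_inj_on[OF g] adj] by blast
  moreover have H: "verts H = {R. S \<subseteq> R \<and> R \<subseteq> T}" using g I by (simp add: bij_betw_def)
  moreover have "S \<in> X G" "T \<in> X G" using HX H \<open>S \<subseteq> T\<close> by auto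
  ultimately show ?thesis by blast
qed

end
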